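(* Let $\mathbf S=\{S^m\}$, $\mathbf Z=\{Z_m\}$ be a general source with general two-sided information and $d_m$ a general sequence of distortion functions. Then $\underline{R_{\mathbf S|\mathbf Z}}(D_E)\le\underline H(\mathbf S|\mathbf Z)$ for every $D_E\ge D'_{E,\min}$, where $D'_{E,\min}=\inf_{\mathbf g}\overline D(\mathbf S,\mathbf g(\mathbf S))$. Moreover, if $\check{\mathcal S}^m=\mathcal S^m$, $d_m(s^m,\check s^m)=1\{s^m\ne\check s^m\}$ and $D_E=0$, then $\underline{R_{\mathbf S|\mathbf Z}}(0)=\underline H(\mathbf S|\mathbf Z)$.
   Context: A general source with general two-sided information: for each $m\ge1$, $(S^m,Z_m)$ is a pair of random variables with an arbitrary joint distribution $P_{S^mZ_m}$ on a finite set $\mathcal S^m\times\mathcal Z_m$; $\check{\mathcal S}^m$ are finite reconstruction sets and $d_m:\mathcal S^m\times\check{\mathcal S}^m\to[0,\infty)$ is an arbitrary sequence of distortion functions. All logarithms are base 2. For real random variables $\{B_m\}$: $\operatorname{p\text{-}liminf}_mB_m=\sup\{r:\lim_m\mathbb P(B_m<r)=0\}$, $\operatorname{p\text{-}limsup}_mB_m=\inf\{r:\lim_m\mathbb P(B_m>r)=0\}$. Definitions: $\underline H(\mathbf S|\mathbf Z)=\operatorname{p\text{-}liminf}_m\frac1m\log\frac{1}{P_{S^m|Z_m}(S^m|Z_m)}$; $\overline I(\mathbf S;\tilde{\mathbf S}|\mathbf Z)=\operatorname{p\text{-}limsup}_m\frac1m\log\frac{P_{\tilde S^m|S^mZ_m}(\tilde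 S^m|S^m,Z_m)}{P_{\tilde S^m|Z_m}(\tilde S^m|Z_m)}$; $\underline D(\mathbf S,\tilde{\mathbf S})=\inf\{d:\liminf_m\mathbb P[d_m(S^m,\tilde S^m)\ge d]<1\}$ and $\overline D(\mathbf S,\tilde{\mathbf S})=\operatorname{p\text{-}limsup}_m d_m(S^m,\tilde S^m)$. $\mathbf g$ ranges over sequences of functions $g^m:\mathcal S^m\to\check{\mathcal S}^m$, and $\mathbf g(\mathbf S)=\{g^m(S^m)\}$. With $D_{E,\min}=\inf_{\mathbf g}\underline D(\mathbf S,\mathbf g(\mathbf S))$, the lossy-equivocation is $\underline{R_{\mathbf S|\mathbf Z}}(D_E)=\inf_{P_{\check{\mathbf S}|\mathbf S\mathbf Z}:\underline D(\mathbf S,\check{\mathbf S})\le D_E}\overline I(\mathbf S;\check{\mathbf S}|\mathbf Z)$ for $D_E\ge D_{E,\min}$ (infimum over sequences of conditional distributions $P_{\check S^m|S^mZ_m}$ on $\check{\mathcal S}^m$) and $\underline{R_{\mathbf S|\mathbf Z}}(D_E)=+\infty$ for $D_E<D_{E,\min}$. *)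

theory Defs
  imports "HOL-Probability.Probability"
begin

text \<open>A general source with two-sided information: for each index m, a joint pmf
  on pairs (s, z).  Alphabets are finite carrier sets per index.\<close>

definition joint_ch :: "('s \<times> 'z) pmf \<Rightarrow> ('s \<Rightarrow> 'z \<Rightarrow> 'c pmf) \<Rightarrow> ('s \<times> 'z \<times> 'c) pmf" where
  "joint_ch p W = bind_pmf p (\<lambda>(s, z). map_pmf (\<lambda>c. (s, z, c)) (W s z))"

definition pliminf :: "(nat \<Rightarrow> 'a pmf) \<Rightarrow> (nat \<Rightarrow> 'a \<Rightarrow> real) \<Rightarrow> ereal" where
  "pliminf \<mu> B = Sup {ereal r | r.
     (\<lambda>m. measure_pmf.prob (\<mu> m) {x. B m x < r}) \<longlonglongrightarrow> 0}"

definition plimsup :: "(nat \<Rightarrow> 'a pmf) \<Rightarrow> (nat \<Rightarrow> 'a \<Rightarrow> real) \<Rightarrow> ereal" where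
  "plimsup \<mu> B = Inf {ereal r | r.
     (\<lambda>m. measure_pmf.prob (\<mu> m) {x. B m x > r}) \<longlonglongrightarrow> 0}"

definition marg_Z :: "('s \<times> 'z) pmf \<Rightarrow> 'z \<Rightarrow> real" where
  "marg_Z p z = measure_pmf.prob p {x. snd x = z}"

definition cond_out :: "('s \<times> 'z) pmf \<Rightarrow> ('s \<Rightarrow> 'z \<Rightarrow> 'c pmf) \<Rightarrow> 'z \<Rightarrow> 'c \<Rightarrow> real" where
  "cond_out p W z c =
     measure_pmf.prob (joint_ch p W) {t. fst (snd t) = z \<and> snd (snd t) = c} / marg_Z p z"

definition cond_ent_inf :: "(nat \<Rightarrow> ('s \<times> 'z) pmf) \<Rightarrow> ereal" where
  "cond_ent_inf P = pliminf P
     (\<lambda>m x. log 2 (1 / (pmf (P m) x / marg_Z (P m) (snd x))) / real m)"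

definition info_sup :: "(nat \<Rightarrow> ('s \<times> 'z) pmf) \<Rightarrow> (nat \<Rightarrow> 's \<Rightarrow> 'z \<Rightarrow> 'c pmf) \<Rightarrow> ereal" where
  "info_sup P W = plimsup (\<lambda>m. joint_ch (P m) (W m))
     (\<lambda>m t. log 2 (pmf (W m (fst t) (fst (snd t))) (snd (snd t))
                    / cond_out (P m) (W m) (fst (snd t)) (snd (snd t))) / real m)"

definition dist_inf :: "(nat \<Rightarrow> ('s \<times> 'c) pmf) \<Rightarrow> (nat \<Rightarrow> 's \<Rightarrow> 'c \<Rightarrow> real) \<Rightarrow> ereal" where
  "dist_inf \<mu> d = Inf {ereal \<delta> | \<delta>.
     liminf (\<lambda>m. ereal (measure_pmf.prob (\<mu> m) {x. d m (fst x) (snd x) \<ge> \<delta>})) < 1}"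

definition dist_sup :: "(nat \<Rightarrow> ('s \<times> 'c) pmf) \<Rightarrow> (nat \<Rightarrow> 's \<Rightarrow> 'c \<Rightarrow> real) \<Rightarrow> ereal" where
  "dist_sup \<mu> d = plimsup \<mu> (\<lambda>m x. d m (fst x) (snd x))"

definition det_maps :: "(nat \<Rightarrow> 's set) \<Rightarrow> (nat \<Rightarrow> 'c set) \<Rightarrow> (nat \<Rightarrow> 's \<Rightarrow> 'c) set" where
  "det_maps SS CS = {g. \<forall>m. \<forall>s\<in>SS m. g m s \<in> CS m}"

definition det_law :: "(nat \<Rightarrow> ('s \<times> 'z) pmf) \<Rightarrow> (nat \<Rightarrow> 's \<Rightarrow> 'c) \<Rightarrow> nat \<Rightarrow> ('s \<times> 'c) pmf" where
  "det_law P g m = map_pmf (\<lambda>x. (fst x, g m (fst x))) (P m)"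

definition DE_min :: "(nat \<Rightarrow> 's set) \<Rightarrow> (nat \<Rightarrow> 'c set) \<Rightarrow> (nat \<Rightarrow> ('s \<times> 'z) pmf)
    \<Rightarrow> (nat \<Rightarrow> 's \<Rightarrow> 'c \<Rightarrow> real) \<Rightarrow> ereal" where
  "DE_min SS CS P d = (INF g \<in> det_maps SS CS. dist_inf (det_law P g) d)"

definition DE_min' :: "(nat \<Rightarrow> 's set) \<Rightarrow> (nat \<Rightarrow> 'c set) \<Rightarrow> (nat \<Rightarrow> ('s \<times> 'z) pmf)
    \<Rightarrow> (nat \<Rightarrow> 's \<Rightarrow> 'c \<Rightarrow> real) \<Rightarrow> ereal" where
  "DE_min' SS CS P d = (INF g \<in> det_maps SS CS. dist_sup (det_law P g) d)"

definition channels :: "(nat \<Rightarrow> 'c set) \<Rightarrow> (nat \<Rightarrow> 's \<Rightarrow> 'z \<Rightarrow> 'c pmf) set" where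
  "channels CS = {W. \<forall>m s z. set_pmf (W m s z) \<subseteq> CS m}"

definition ch_law :: "(nat \<Rightarrow> ('s \<times> 'z) pmf) \<Rightarrow> (nat \<Rightarrow> 's \<Rightarrow> 'z \<Rightarrow> 'c pmf) \<Rightarrow> nat \<Rightarrow> ('s \<times> 'c) pmf" where
  "ch_law P W m = map_pmf (\<lambda>t. (fst t, snd (snd t))) (joint_ch (P m) (W m))"

definition lossy_equiv :: "(nat \<Rightarrow> 's set) \<Rightarrow> (nat \<Rightarrow> 'c set) \<Rightarrow> (nat \<Rightarrow> ('s \<times> 'z) pmf)
    \<Rightarrow> (nat \<Rightarrow> 's \<Rightarrow> 'c \<Rightarrow> real) \<Rightarrow> real \<Rightarrow> ereal" where
  "lossy_equiv SS CS P d DE =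
     (if ereal DE < DE_min SS CS P d then \<infinity>
      else (INF W \<in> {W \<in> channels CS. dist_inf (ch_law P W) d \<le> ereal DE}. info_sup P W))"

end

theory Submission
  imports Defs
begin

text \<open>
  Write \<open>h(s,z) = -log P(s|z) / m\<close> for the conditional self-information and
  \<open>i = log (W(c|s,z) / P(c|z)) / m\<close> for the information density of a test channel.

  Upper bound: since \<open>D'_{E,min} \<le> D_E\<close>, a diagonal choice among near-optimal
  deterministic codes yields one code \<open>g\<close> with \<open>P(d(S, g S) \<ge> \<delta>) \<rightarrow> 0\<close> for every
  \<open>\<delta> > D_E\<close>. For \<open>r > H(S|Z)\<close>, let the test channel output \<open>g(s)\<close> where \<open>h(s,z) < r\<close>
  and a fixed symbol \<open>c\<close> elsewhere. An output \<open>c' \<noteq> c\<close> produced from \<open>(s,z)\<close> has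
  \<open>P(c'|z) \<ge> P(s|z) > 2^{-mr}\<close>, so \<open>i > r\<close> forces the output \<open>c\<close> together with
  \<open>P(c|z) < 2^{-mr}\<close>, an event of probability at most \<open>2^{-mr}\<close>. Because \<open>r > H(S|Z)\<close>,
  the event \<open>h < r\<close> does not become negligible, so the distortion stays below \<open>\<delta>\<close> with
  probability bounded away from 0.

  Lower bound for the Hamming distortion: if \<open>I(S;\<check>S|Z) < a < b < H(S|Z)\<close>, then
  on \<open>{S = \<check>S, i \<le> a, h \<ge> b}\<close> the joint law is at most \<open>2^{m(a-b)}\<close> times the law
  of \<open>(\<check>S, Z)\<close>, so \<open>P(S = \<check>S) \<le> P(i > a) + P(h < b) + 2^{m(a-b)} \<rightarrow> 0\<close>. The error
  probability then tends to 1, which is incompatible with lower distortion 0.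
\<close>

definition cond_self_info :: "('s \<times> 'z) pmf \<Rightarrow> real \<Rightarrow> 's \<times> 'z \<Rightarrow> real" where
  "cond_self_info p n x = log 2 (1 / (pmf p x / marg_Z p (snd x))) / n"

definition cond_info_density ::
    "('s \<times> 'z) pmf \<Rightarrow> ('s \<Rightarrow> 'z \<Rightarrow> 'c pmf) \<Rightarrow> real \<Rightarrow> 's \<times> 'z \<times> 'c \<Rightarrow> real" where
  "cond_info_density p W n t =
     log 2 (pmf (W (fst t) (fst (snd t))) (snd (snd t)) / cond_out p W (fst (snd t)) (snd (snd t))) / n"

lemma cond_ent_inf_altdef: "cond_ent_inf P = pliminf P (\<lambda>m. cond_self_info (P m) (real m))"
  unfolding cond_ent_inf_def cond_self_info_def ..

lemma info_sup_altdef: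
  "info_sup P W = plimsup (\<lambda>m. joint_ch (P m) (W m)) (\<lambda>m. cond_info_density (P m) (W m) (real m))"
  unfolding info_sup_def cond_info_density_def ..

lemma log_inverse_div_le_iff:
  assumes "0 < x" and "0 < n"
  shows "log 2 (1 / x) / n \<le> a \<longleftrightarrow> 2 powr (- (n * a)) \<le> x"
proof -
  have "log 2 (1 / x) / n \<le> a \<longleftrightarrow> log 2 (1 / x) \<le> n * a"
    using assms by (simp add: pos_divide_le_eq mult.commute)
  also have "\<dots> \<longleftrightarrow> 1 / x \<le> 2 powr (n * a)"
    using assms by (simp add: log_le_iff)
  also have "\<dots> \<longleftrightarrow> 2 powr (- (n * a)) \<le> x"
    using assms by (simp add: powr_minus field_simps)
  finally show ?thesis .
qed

lemma log_inverse_div_less_iff: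
  assumes "0 < x" and "0 < n"
  shows "log 2 (1 / x) / n < a \<longleftrightarrow> 2 powr (- (n * a)) < x"
proof -
  have "log 2 (1 / x) / n < a \<longleftrightarrow> log 2 (1 / x) < n * a"
    using assms by (simp add: pos_divide_less_eq mult.commute)
  also have "\<dots> \<longleftrightarrow> 1 / x < 2 powr (n * a)"
    using assms by (simp add: log_less_iff)
  also have "\<dots> \<longleftrightarrow> 2 powr (- (n * a)) < x"
    using assms by (simp add: powr_minus field_simps)
  finally show ?thesis .
qed

lemma pmf_joint_ch: "pmf (joint_ch p W) (s, z, c) = pmf p (s, z) * pmf (W s z) c"
proof -
  have "pmf (joint_ch p W) (s, z, c)
      = (\<Sum>x\<in>{(s, z)}. pmf (map_pmf (\<lambda>c'. (fst x, snd x, c')) (W (fst x) (snd x))) (s, z, c) * pmf p x)"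
    unfolding joint_ch_def pmf_bind split_beta
    by (rule integral_measure_pmf_real) (auto simp: pmf_eq_0_set_pmf)
  also have "\<dots> = pmf (W s z) c * pmf p (s, z)"
    using pmf_map_inj'[of "\<lambda>c'. (s, z, c')" "W s z" c] by (simp add: inj_def)
  finally show ?thesis by simp
qed

lemma set_pmf_joint_ch:
  "set_pmf (joint_ch p W) = {(s, z, c). (s, z) \<in> set_pmf p \<and> c \<in> set_pmf (W s z)}"
  unfolding joint_ch_def by (auto simp: set_bind_pmf)

lemma measure_joint_ch_source:
  "measure (joint_ch p W) ((\<lambda>t. (fst t, fst (snd t))) -` A) = measure p A"
proof -
  have "map_pmf (\<lambda>t. (fst t, fst (snd t))) (joint_ch p W) = p"
    unfolding joint_ch_def map_bind_pmf
    by (simp add: split_beta map_pmf_comp bind_return_pmf' flip: return_pmf_def)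
  then show ?thesis by (metis measure_map_pmf)
qed

lemma ch_law_deterministic:
  "ch_law P (\<lambda>m s z. return_pmf (f m (s, z))) m = map_pmf (\<lambda>x. (fst x, f m x)) (P m)"
  unfolding ch_law_def joint_ch_def map_bind_pmf
  by (simp add: split_beta map_pmf_comp bind_return_pmf' map_pmf_def[symmetric])

lemma pmf_le_marg_Z: "pmf p x \<le> marg_Z p (snd x)"
  unfolding marg_Z_def measure_pmf_single[symmetric]
  by (rule measure_pmf.finite_measure_mono) auto

lemma marg_Z_pos: "x \<in> set_pmf p \<Longrightarrow> 0 < marg_Z p (snd x)"
  using pmf_le_marg_Z[of p x] pmf_positive[of x p] by linarith

lemma marg_Z_eq_pmf_map_snd: "marg_Z p z = pmf (map_pmf snd p) z"
  unfolding marg_Z_def pmf_map by (simp add: vimage_def)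

lemma cond_out_nonneg: "0 \<le> cond_out p W z c"
  unfolding cond_out_def marg_Z_def by simp

lemma cond_out_mult_marg_Z:
  assumes "0 < marg_Z p z"
  shows "cond_out p W z c * marg_Z p z
           = measure (joint_ch p W) {t. fst (snd t) = z \<and> snd (snd t) = c}"
  using assms unfolding cond_out_def by simp

lemma pmf_mult_le_cond_out:
  assumes "0 < marg_Z p z"
  shows "pmf p (s, z) * pmf (W s z) c \<le> cond_out p W z c * marg_Z p z"
proof -
  have "measure (joint_ch p W) {(s, z, c)}
      \<le> measure (joint_ch p W) {t. fst (snd t) = z \<and> snd (snd t) = c}"
    by (rule measure_pmf.finite_measure_mono) auto
  then show ?thesis unfolding cond_out_mult_marg_Z[OF assms] measure_pmf_single pmf_joint_ch .
qed

lemma cond_self_info_nonneg: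
  fixes p :: "('s \<times> 'z) pmf"
  assumes "x \<in> set_pmf p" and "0 \<le> n"
  shows "0 \<le> cond_self_info p n x"
proof -
  have "1 \<le> 1 / (pmf p x / marg_Z p (snd x))"
    using pmf_le_marg_Z[of p x] pmf_positive[OF assms(1)] by (simp add: field_simps)
  then show ?thesis unfolding cond_self_info_def using assms(2) by simp
qed

lemma prob_cond_prob_less_le:
  fixes p :: "('s \<times> 'z) pmf"
  assumes fin: "finite (set_pmf p)" and e: "0 \<le> e"
  shows "measure p {x. A x \<and> measure p {y. A y \<and> snd y = snd x} / marg_Z p (snd x) < e} \<le> e"
proof -
  define cond where "cond z = measure p {y. A y \<and> snd y = z} / marg_Z p z" for z
  define Z where "Z = {z \<in> snd ` set_pmf p. cond z < e}"
  have fin_Z: "finite Z" using fin unfolding Z_def by auto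
  have "measure p {x. A x \<and> cond (snd x) < e} = measure p ({x. A x \<and> cond (snd x) < e} \<inter> set_pmf p)"
    by (simp add: measure_Int_set_pmf)
  also have "\<dots> \<le> measure p (\<Union>z\<in>Z. {y. A y \<and> snd y = z})"
    by (rule measure_pmf.finite_measure_mono) (auto simp: Z_def)
  also have "\<dots> \<le> (\<Sum>z\<in>Z. measure p {y. A y \<and> snd y = z})"
    by (rule measure_pmf.finite_measure_subadditive_finite[OF fin_Z]) auto
  also have "\<dots> \<le> (\<Sum>z\<in>Z. e * pmf (map_pmf snd p) z)"
  proof (rule sum_mono)
    fix z assume "z \<in> Z"
    then obtain x where x: "x \<in> set_pmf p" "z = snd x" and "cond z < e" unfolding Z_def by auto
    moreover have "0 < marg_Z p z" using marg_Z_pos[OF x(1)] x(2) by simp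
    ultimately show "measure p {y. A y \<and> snd y = z} \<le> e * pmf (map_pmf snd p) z"
      by (simp add: cond_def marg_Z_eq_pmf_map_snd field_simps)
  qed
  also have "\<dots> = e * measure (map_pmf snd p) Z"
    by (simp add: sum_distrib_left measure_measure_pmf_finite[OF fin_Z])
  also have "\<dots> \<le> e"
    using e by (simp add: mult_left_le)
  finally show ?thesis unfolding cond_def .
qed

subsection \<open>One-shot bounds\<close>

lemma pmf_joint_ch_le_cond_out:
  assumes sz: "(s, z) \<in> set_pmf p" and n: "0 < n"
    and info: "cond_info_density p W n (s, z, c) \<le> a"
    and self_info: "b \<le> cond_self_info p n (s, z)"
  shows "pmf (joint_ch p W) (s, z, c) \<le> 2 powr (n * (a - b)) * (cond_out p W z c * marg_Z p z)"
proof -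
  define q where "q = cond_out p W z c"
  have M: "0 < marg_Z p z" using marg_Z_pos[OF sz] by simp
  have pi: "0 < pmf p (s, z)" using sz by (simp add: pmf_positive)
  have pq: "pmf p (s, z) * pmf (W s z) c \<le> q * marg_Z p z"
    unfolding q_def by (rule pmf_mult_le_cond_out[OF M])
  have "pmf p (s, z) / marg_Z p z \<le> 2 powr (- (n * b))"
    using self_info log_inverse_div_less_iff[of "pmf p (s, z) / marg_Z p z" n b] pi M n
    by (simp add: cond_self_info_def)
  then have p_le: "pmf p (s, z) \<le> 2 powr (- (n * b)) * marg_Z p z"
    using M by (simp add: field_simps)
  have w_le: "pmf (W s z) c \<le> 2 powr (n * a) * q"
  proof (cases "pmf (W s z) c = 0")
    case False
    then have w: "0 < pmf (W s z) c" by (simp add: order_less_le)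
    have "0 < q * marg_Z p z" using mult_pos_pos[OF pi w] pq by linarith
    then have q: "0 < q" using M by (simp add: zero_less_mult_iff)
    have "log 2 (1 / (q / pmf (W s z) c)) / n \<le> a"
      using info by (simp add: cond_info_density_def q_def)
    then have "2 powr (- (n * a)) \<le> q / pmf (W s z) c"
      using log_inverse_div_le_iff[of "q / pmf (W s z) c" n a] q w n by simp
    then show ?thesis using w by (simp add: powr_minus field_simps)
  qed (simp add: q_def cond_out_nonneg)
  have "pmf (joint_ch p W) (s, z, c) \<le> (2 powr (- (n * b)) * marg_Z p z) * (2 powr (n * a) * q)"
    unfolding pmf_joint_ch by (rule mult_mono[OF p_le w_le]) (use M q_def cond_out_nonneg in auto)
  also have "\<dots> = 2 powr (n * (a - b)) * (q * marg_Z p z)"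
    by (simp add: powr_add[symmetric] algebra_simps)
  finally show ?thesis unfolding q_def .
qed

lemma prob_correct_typical_le:
  fixes p :: "('s \<times> 'z) pmf" and W :: "'s \<Rightarrow> 'z \<Rightarrow> 's pmf"
  assumes fin: "finite (set_pmf p)" and n: "0 < n"
  shows "measure (joint_ch p W) {t. fst t = snd (snd t) \<and> cond_info_density p W n t \<le> a
           \<and> b \<le> cond_self_info p n (fst t, fst (snd t))} \<le> 2 powr (n * (a - b))"
    (is "measure _ ?E \<le> _")
proof -
  define J where "J = joint_ch p W"
  define diag where "diag x = (fst x, snd x, fst x)" for x :: "'s \<times> 'z"
  define F where "F = {x \<in> set_pmf p. diag x \<in> ?E}"
  define \<mu> where "\<mu> = map_pmf (\<lambda>t. (snd (snd t), fst (snd t))) J"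
  have fin_F: "finite F" using fin unfolding F_def by auto
  have inj_diag: "inj diag" unfolding diag_def inj_def by auto
  have "measure J ?E = measure J (?E \<inter> set_pmf J)" by (simp add: measure_Int_set_pmf)
  also have "\<dots> \<le> measure J (diag ` F)"
    by (rule measure_pmf.finite_measure_mono)
      (auto simp: J_def set_pmf_joint_ch F_def diag_def image_iff)
  also have "\<dots> = (\<Sum>x\<in>F. pmf J (diag x))"
    using fin_F inj_diag by (simp add: measure_measure_pmf_finite sum.reindex inj_on_subset)
  also have "\<dots> \<le> (\<Sum>x\<in>F. 2 powr (n * (a - b)) * pmf \<mu> x)"
  proof (rule sum_mono)
    fix x assume x: "x \<in> F"
    obtain s z where x_eq: "x = (s, z)" by (cases x)
    have sz: "(s, z) \<in> set_pmf p" and typical: "diag x \<in> ?E" using x x_eq F_def by auto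
    have "pmf \<mu> x = cond_out p W z s * marg_Z p z"
      unfolding cond_out_mult_marg_Z[OF marg_Z_pos[OF sz, simplified]] \<mu>_def pmf_map x_eq J_def
      by (rule arg_cong[where f = "measure (joint_ch p W)"]) auto
    then show "pmf J (diag x) \<le> 2 powr (n * (a - b)) * pmf \<mu> x"
      using typical pmf_joint_ch_le_cond_out[OF sz n, of W s a b] unfolding J_def x_eq diag_def by simp
  qed
  also have "\<dots> = 2 powr (n * (a - b)) * measure \<mu> F"
    by (simp add: sum_distrib_left measure_measure_pmf_finite fin_F)
  also have "\<dots> \<le> 2 powr (n * (a - b))"
    by (simp add: mult_left_le)
  finally show ?thesis unfolding J_def .
qed

lemma prob_correct_le:
  fixes p :: "('s \<times> 'z) pmf" and W :: "'s \<Rightarrow> 'z \<Rightarrow> 's pmf"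
  assumes fin: "finite (set_pmf p)" and n: "0 < n"
  shows "measure (joint_ch p W) {t. fst t = snd (snd t)}
           \<le> measure (joint_ch p W) {t. a < cond_info_density p W n t}
             + measure p {x. cond_self_info p n x < b} + 2 powr (n * (a - b))"
proof -
  let ?J = "joint_ch p W"
  have "measure ?J {t. fst t = snd (snd t)}
      \<le> measure ?J ({t. a < cond_info_density p W n t}
           \<union> (\<lambda>t. (fst t, fst (snd t))) -` {x. cond_self_info p n x < b}
           \<union> {t. fst t = snd (snd t) \<and> cond_info_density p W n t \<le> a
                \<and> b \<le> cond_self_info p n (fst t, fst (snd t))})"
    by (rule measure_pmf.finite_measure_mono) auto
  also have "\<dots> \<le> measure ?J ({t. a < cond_info_density p W n t}
           \<union> (\<lambda>t. (fst t, fst (snd t))) -` {x. cond_self_info p n x < b})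
      + measure ?J {t. fst t = snd (snd t) \<and> cond_info_density p W n t \<le> a
                \<and> b \<le> cond_self_info p n (fst t, fst (snd t))}"
    by (rule measure_Un_le) auto
  also have "\<dots> \<le> measure ?J {t. a < cond_info_density p W n t}
      + measure ?J ((\<lambda>t. (fst t, fst (snd t))) -` {x. cond_self_info p n x < b})
      + measure ?J {t. fst t = snd (snd t) \<and> cond_info_density p W n t \<le> a
                \<and> b \<le> cond_self_info p n (fst t, fst (snd t))}"
    by (intro add_right_mono measure_Un_le) auto
  finally show ?thesis
    using prob_correct_typical_le[OF fin n, of W a b]
      measure_joint_ch_source[of p W "{x. cond_self_info p n x < b}"] by linarith
qed

lemma info_density_greater_imp_fallback:
  fixes p :: "('s \<times> 'z) pmf" and f :: "'s \<times> 'z \<Rightarrow> 'c"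
  defines "W \<equiv> \<lambda>s z. return_pmf (f (s, z))"
  assumes sz: "(s, z) \<in> set_pmf p" and n: "0 < n"
    and low_info: "f (s, z) \<noteq> c \<Longrightarrow> cond_self_info p n (s, z) < r"
    and high_info: "r < cond_info_density p W n (s, z, f (s, z))"
  shows "f (s, z) = c \<and> measure p {y. f y = c \<and> snd y = z} / marg_Z p z < 2 powr (- (n * r))"
proof -
  define q where "q = cond_out p W z (f (s, z))"
  have M: "0 < marg_Z p z" using marg_Z_pos[OF sz] by simp
  have pi: "0 < pmf p (s, z)" using sz by (simp add: pmf_positive)
  have p_le: "pmf p (s, z) / marg_Z p z \<le> q"
    using pmf_mult_le_cond_out[OF M, of s W "f (s, z)"] M by (simp add: W_def q_def field_simps)
  then have q: "0 < q" using pi M by (meson divide_pos_pos order_less_le_trans)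
  have q_less: "q < 2 powr (- (n * r))"
    using high_info log_inverse_div_le_iff[OF q n, of r] by (auto simp: cond_info_density_def W_def q_def)
  have c: "f (s, z) = c"
  proof (rule ccontr)
    assume "f (s, z) \<noteq> c"
    then have "2 powr (- (n * r)) < pmf p (s, z) / marg_Z p z"
      using low_info log_inverse_div_less_iff[of "pmf p (s, z) / marg_Z p z" n r] pi M n
      by (simp add: cond_self_info_def)
    with p_le q_less show False by simp
  qed
  have "measure p {y. f y = c \<and> snd y = z}
      = measure (joint_ch p W) ((\<lambda>t. (fst t, fst (snd t))) -` {y. f y = c \<and> snd y = z})"
    by (rule measure_joint_ch_source[symmetric])
  also have "\<dots> = measure (joint_ch p W)
      ((\<lambda>t. (fst t, fst (snd t))) -` {y. f y = c \<and> snd y = z} \<inter> set_pmf (joint_ch p W))"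
    by (rule measure_Int_set_pmf[symmetric])
  also have "\<dots> \<le> measure (joint_ch p W) {t. fst (snd t) = z \<and> snd (snd t) = c}"
    by (rule measure_pmf.finite_measure_mono) (auto simp: W_def set_pmf_joint_ch)
  also have "\<dots> = q * marg_Z p z"
    unfolding q_def c by (rule cond_out_mult_marg_Z[OF M, symmetric])
  finally have "measure p {y. f y = c \<and> snd y = z} / marg_Z p z \<le> q"
    using M by (simp add: field_simps)
  with c q_less show ?thesis by simp
qed

lemma prob_info_density_greater_le:
  fixes p :: "('s \<times> 'z) pmf" and f :: "'s \<times> 'z \<Rightarrow> 'c"
  defines "W \<equiv> \<lambda>s z. return_pmf (f (s, z))"
  assumes fin: "finite (set_pmf p)" and n: "0 < n"
    and low_info: "\<And>x. x \<in> set_pmf p \<Longrightarrow> f x \<noteq> c \<Longrightarrow> cond_self_info p n x < r"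
  shows "measure (joint_ch p W) {t. r < cond_info_density p W n t} \<le> 2 powr (- (n * r))"
    (is "measure _ ?E \<le> ?eps")
proof -
  define src where "src t = (fst t, fst (snd t))" for t :: "'s \<times> 'z \<times> 'c"
  define A where "A = {x. f x = c \<and> measure p {y. f y = c \<and> snd y = snd x} / marg_Z p (snd x) < ?eps}"
  have "t \<in> src -` A" if "t \<in> ?E \<inter> set_pmf (joint_ch p W)" for t
  proof -
    from that obtain s z where t: "t = (s, z, f (s, z))" and sz: "(s, z) \<in> set_pmf p"
      by (auto simp: W_def set_pmf_joint_ch)
    with that show ?thesis
      using info_density_greater_imp_fallback[where f = f and c = c, OF sz n low_info[OF sz]]
      by (simp add: W_def A_def src_def)
  qed
  then have "?E \<inter> set_pmf (joint_ch p W) \<subseteq> src -` A" by blast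
  then have "measure (joint_ch p W) (?E \<inter> set_pmf (joint_ch p W)) \<le> measure (joint_ch p W) (src -` A)"
    by (rule measure_pmf.finite_measure_mono) simp
  then have "measure (joint_ch p W) ?E \<le> measure (joint_ch p W) (src -` A)"
    by (simp add: measure_Int_set_pmf)
  also have "\<dots> = measure p A"
    unfolding src_def by (rule measure_joint_ch_source)
  also have "\<dots> \<le> ?eps"
    unfolding A_def by (rule prob_cond_prob_less_le[OF fin]) simp
  finally show ?thesis .
qed

subsection \<open>Spectral limits and distortion\<close>

lemma plimsup_leI:
  fixes \<mu> :: "nat \<Rightarrow> 'a pmf"
  shows "(\<lambda>m. measure (\<mu> m) {x. r < B m x}) \<longlonglongrightarrow> 0 \<Longrightarrow> plimsup \<mu> B \<le> ereal r"
  unfolding plimsup_def by (rule Inf_lower) auto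

lemma tendsto_prob_greater_if_plimsup_less:
  fixes \<mu> :: "nat \<Rightarrow> 'a pmf"
  assumes "plimsup \<mu> B < ereal a"
  shows "(\<lambda>m. measure (\<mu> m) {x. a < B m x}) \<longlonglongrightarrow> 0"
proof -
  obtain r where "r < a" and r: "(\<lambda>m. measure (\<mu> m) {x. r < B m x}) \<longlonglongrightarrow> 0"
    using assms unfolding plimsup_def Inf_less_iff by auto
  then show ?thesis
    by (intro Lim_null_comparison[OF _ r] always_eventually allI)
      (auto intro!: measure_pmf.finite_measure_mono)
qed

lemma pliminf_geI:
  fixes \<mu> :: "nat \<Rightarrow> 'a pmf"
  shows "(\<lambda>m. measure (\<mu> m) {x. B m x < r}) \<longlonglongrightarrow> 0 \<Longrightarrow> ereal r \<le> pliminf \<mu> B"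
  unfolding pliminf_def by (rule Sup_upper) auto

lemma tendsto_prob_less_if_pliminf_greater:
  fixes \<mu> :: "nat \<Rightarrow> 'a pmf"
  assumes "ereal b < pliminf \<mu> B"
  shows "(\<lambda>m. measure (\<mu> m) {x. B m x < b}) \<longlonglongrightarrow> 0"
proof -
  obtain r where "b < r" and r: "(\<lambda>m. measure (\<mu> m) {x. B m x < r}) \<longlonglongrightarrow> 0"
    using assms unfolding pliminf_def less_Sup_iff by auto
  then show ?thesis
    by (intro Lim_null_comparison[OF _ r] always_eventually allI)
      (auto intro!: measure_pmf.finite_measure_mono)
qed

lemma cond_ent_inf_nonneg: "0 \<le> cond_ent_inf P"
proof -
  have "{x. cond_self_info (P m) (real m) x < 0} \<inter> set_pmf (P m) = {}" for m
    using cond_self_info_nonneg[of _ "P m" "real m"] by force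
  then have "measure (P m) {x. cond_self_info (P m) (real m) x < 0} = 0" for m
    by (metis measure_Int_set_pmf measure_empty)
  then have "ereal 0 \<le> cond_ent_inf P"
    unfolding cond_ent_inf_altdef by (intro pliminf_geI) simp
  then show ?thesis by (simp add: zero_ereal_def)
qed

lemma liminf_prob_less_one_iff:
  fixes \<mu> :: "nat \<Rightarrow> 'a pmf"
  shows "liminf (\<lambda>m. ereal (measure (\<mu> m) (A m))) < 1 \<longleftrightarrow> \<not> (\<lambda>m. measure (\<mu> m) (A m)) \<longlonglongrightarrow> 1"
proof
  assume lt: "liminf (\<lambda>m. ereal (measure (\<mu> m) (A m))) < 1"
  show "\<not> (\<lambda>m. measure (\<mu> m) (A m)) \<longlonglongrightarrow> 1"
  proof
    assume "(\<lambda>m. measure (\<mu> m) (A m)) \<longlonglongrightarrow> 1"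
    then have "liminf (\<lambda>m. ereal (measure (\<mu> m) (A m))) = ereal 1"
      by (intro lim_imp_Liminf) auto
    with lt show False by simp
  qed
next
  assume not_one: "\<not> (\<lambda>m. measure (\<mu> m) (A m)) \<longlonglongrightarrow> 1"
  show "liminf (\<lambda>m. ereal (measure (\<mu> m) (A m))) < 1"
  proof (rule ccontr)
    assume "\<not> liminf (\<lambda>m. ereal (measure (\<mu> m) (A m))) < 1"
    then have "1 \<le> liminf (\<lambda>m. ereal (measure (\<mu> m) (A m)))" by (simp add: not_less)
    moreover have "limsup (\<lambda>m. ereal (measure (\<mu> m) (A m))) \<le> 1"
      by (intro Limsup_bounded always_eventually) simp
    ultimately have "(\<lambda>m. ereal (measure (\<mu> m) (A m))) \<longlonglongrightarrow> 1"
      using Liminf_le_Limsup[of sequentially "\<lambda>m. ereal (measure (\<mu> m) (A m))"]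
      by (intro tendsto_iff_Liminf_eq_Limsup[THEN iffD2]) (auto intro: antisym order.trans)
    with not_one show False by (simp add: one_ereal_def)
  qed
qed

lemma dist_inf_altdef:
  fixes \<mu> :: "nat \<Rightarrow> ('s \<times> 'c) pmf"
  shows "dist_inf \<mu> d = Inf {ereal \<delta> | \<delta>. \<not> (\<lambda>m. measure (\<mu> m) {x. \<delta> \<le> d m (fst x) (snd x)}) \<longlonglongrightarrow> 1}"
  unfolding dist_inf_def liminf_prob_less_one_iff ..

lemma dist_inf_leI:
  fixes \<mu> :: "nat \<Rightarrow> ('s \<times> 'c) pmf"
  assumes "\<And>\<delta>. DE < \<delta> \<Longrightarrow> \<not> (\<lambda>m. measure (\<mu> m) {x. \<delta> \<le> d m (fst x) (snd x)}) \<longlonglongrightarrow> 1"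
  shows "dist_inf \<mu> d \<le> ereal DE"
proof (rule dense_ge)
  fix y assume "ereal DE < y"
  then show "dist_inf \<mu> d \<le> y"
    using assms by (cases y) (auto simp: dist_inf_altdef intro!: Inf_lower)
qed

lemma dist_inf_le_dist_sup: "dist_inf \<mu> d \<le> dist_sup \<mu> d"
  unfolding dist_sup_def plimsup_def
proof (rule Inf_greatest, safe)
  fix r assume tail: "(\<lambda>m. measure (\<mu> m) {x. r < d m (fst x) (snd x)}) \<longlonglongrightarrow> 0"
  show "dist_inf \<mu> d \<le> ereal r"
  proof (rule dist_inf_leI)
    fix \<delta> assume "r < \<delta>"
    then have "(\<lambda>m. measure (\<mu> m) {x. \<delta> \<le> d m (fst x) (snd x)}) \<longlonglongrightarrow> 0"
      by (intro Lim_null_comparison[OF _ tail] always_eventually allI)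
        (auto intro!: measure_pmf.finite_measure_mono)
    then show "\<not> (\<lambda>m. measure (\<mu> m) {x. \<delta> \<le> d m (fst x) (snd x)}) \<longlonglongrightarrow> 1"
      using LIMSEQ_unique by fastforce
  qed
qed

lemma DE_min_le_DE_min': "DE_min SS CS P d \<le> DE_min' SS CS P d"
  unfolding DE_min_def DE_min'_def by (intro INF_mono) (auto intro: dist_inf_le_dist_sup)

lemma LIMSEQ_two_powr_mult:
  fixes r :: real
  assumes "r < 0"
  shows "(\<lambda>m. 2 powr (real m * r)) \<longlonglongrightarrow> 0"
proof -
  have "2 powr (real m * r) = (2 powr r) ^ m" for m
    by (subst powr_realpow[symmetric]) (simp_all add: powr_powr mult.commute)
  moreover have "(\<lambda>m. (2 powr r) ^ m) \<longlonglongrightarrow> 0"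
    using assms by (intro LIMSEQ_power_zero) (simp add: powr_less_one)
  ultimately show ?thesis by simp
qed

subsection \<open>Achievability\<close>

lemma diagonal_tendsto_zero:
  fixes a :: "nat \<Rightarrow> nat \<Rightarrow> real"
  assumes lim: "\<And>k. a k \<longlonglongrightarrow> 0"
  obtains \<kappa> where "filterlim \<kappa> at_top sequentially" and "(\<lambda>m. a (\<kappa> m) m) \<longlonglongrightarrow> 0"
proof -
  define \<epsilon> where "\<epsilon> k = inverse (real (Suc k))" for k
  have "\<exists>N. \<forall>m\<ge>N. \<bar>a k m\<bar> < \<epsilon> k" for k
    using order_tendstoD(2)[OF tendsto_rabs_zero[OF lim[of k]], of "\<epsilon> k"]
    by (simp add: \<epsilon>_def eventually_sequentially)
  then obtain N where N: "\<And>k m. N k \<le> m \<Longrightarrow> \<bar>a k m\<bar> < \<epsilon> k" by metis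
  define \<kappa> where "\<kappa> m = Max {k. k + N k \<le> m}" for m
  have fin: "finite {k. k + N k \<le> m}" for m
    by (rule finite_subset[of _ "{..m}"]) auto
  have ge: "K \<le> \<kappa> m" if "K + N K \<le> m" for K m
    unfolding \<kappa>_def using fin that by (intro Max_ge) auto
  have bound: "\<bar>a (\<kappa> m) m\<bar> < \<epsilon> (\<kappa> m)" if "N 0 \<le> m" for m
  proof -
    have "\<kappa> m \<in> {k. k + N k \<le> m}"
      unfolding \<kappa>_def using that by (intro Max_in[OF fin]) (auto intro: exI[of _ 0])
    then show ?thesis by (intro N) simp
  qed
  have \<kappa>_top: "filterlim \<kappa> at_top sequentially"
    unfolding filterlim_at_top eventually_sequentially using ge by blast
  have "(\<lambda>m. \<epsilon> (\<kappa> m)) \<longlonglongrightarrow> 0"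
    unfolding \<epsilon>_def by (rule filterlim_compose[OF LIMSEQ_inverse_real_of_nat \<kappa>_top])
  then have "(\<lambda>m. a (\<kappa> m) m) \<longlonglongrightarrow> 0"
    by (rule Lim_null_comparison[rotated])
      (auto simp: eventually_sequentially intro!: exI[of _ "N 0"] less_imp_le bound)
  with \<kappa>_top show thesis by (rule that)
qed

lemma det_map_tail_tendsto_zero:
  assumes "DE_min' SS CS P d \<le> ereal DE"
  obtains G where "G \<in> det_maps SS CS"
    and "\<And>\<delta>. DE < \<delta> \<Longrightarrow> (\<lambda>m. measure (P m) {x. \<delta> \<le> d m (fst x) (G m (fst x))}) \<longlonglongrightarrow> 0"
proof -
  define \<epsilon> where "\<epsilon> k = inverse (real (Suc k))" for k
  have "\<forall>k. \<exists>g. g \<in> det_maps SS CS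
          \<and> (\<lambda>m. measure (P m) {x. DE + \<epsilon> k < d m (fst x) (g m (fst x))}) \<longlonglongrightarrow> 0"
  proof
    fix k
    have "DE_min' SS CS P d < ereal (DE + \<epsilon> k)"
      using assms by (rule le_less_trans) (simp add: \<epsilon>_def)
    then obtain g where "g \<in> det_maps SS CS" and "dist_sup (det_law P g) d < ereal (DE + \<epsilon> k)"
      unfolding DE_min'_def INF_less_iff by blast
    then show "\<exists>g. g \<in> det_maps SS CS
          \<and> (\<lambda>m. measure (P m) {x. DE + \<epsilon> k < d m (fst x) (g m (fst x))}) \<longlonglongrightarrow> 0"
      unfolding dist_sup_def
      by (auto dest!: tendsto_prob_greater_if_plimsup_less simp: det_law_def vimage_def)
  qed
  from choice[OF this] obtain g where g: "\<And>k. g k \<in> det_maps SS CS"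
    and tail: "\<And>k. (\<lambda>m. measure (P m) {x. DE + \<epsilon> k < d m (fst x) (g k m (fst x))}) \<longlonglongrightarrow> 0"
    by blast
  obtain \<kappa> where \<kappa>_top: "filterlim \<kappa> at_top sequentially"
    and diag: "(\<lambda>m. measure (P m) {x. DE + \<epsilon> (\<kappa> m) < d m (fst x) (g (\<kappa> m) m (fst x))}) \<longlonglongrightarrow> 0"
    using diagonal_tendsto_zero[OF tail] .
  show thesis
  proof (rule that)
    show "(\<lambda>m. g (\<kappa> m) m) \<in> det_maps SS CS" using g by (auto simp: det_maps_def)
  next
    fix \<delta> assume "DE < \<delta>"
    then have "eventually (\<lambda>k. \<epsilon> k < \<delta> - DE) sequentially"
      unfolding \<epsilon>_def by (intro order_tendstoD(2)[OF LIMSEQ_inverse_real_of_nat]) simp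
    then have "eventually (\<lambda>m. \<epsilon> (\<kappa> m) < \<delta> - DE) sequentially"
      by (rule eventually_compose_filterlim[OF _ \<kappa>_top])
    then show "(\<lambda>m. measure (P m) {x. \<delta> \<le> d m (fst x) (g (\<kappa> m) m (fst x))}) \<longlonglongrightarrow> 0"
      by (intro Lim_null_comparison[OF _ diag])
        (auto elim!: eventually_mono intro!: measure_pmf.finite_measure_mono)
  qed
qed

lemma info_sup_deterministic_le:
  fixes P :: "nat \<Rightarrow> ('s \<times> 'z) pmf" and f :: "nat \<Rightarrow> 's \<times> 'z \<Rightarrow> 'c"
  assumes fin_P: "\<And>m. finite (set_pmf (P m))" and r: "0 < r"
    and low_info: "\<And>m x. x \<in> set_pmf (P m) \<Longrightarrow> f m x \<noteq> c m \<Longrightarrow> cond_self_info (P m) (real m) x < r"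
  shows "info_sup P (\<lambda>m s z. return_pmf (f m (s, z))) \<le> ereal r"
proof -
  let ?W = "\<lambda>m s z. return_pmf (f m (s, z))"
  have "measure (joint_ch (P m) (?W m)) {t. r < cond_info_density (P m) (?W m) (real m) t}
      \<le> 2 powr (- (real m * r))" if "0 < m" for m
    using that low_info
    by (intro prob_info_density_greater_le[OF fin_P, where c = "c m"]) auto
  then have "eventually (\<lambda>m. norm (measure (joint_ch (P m) (?W m))
      {t. r < cond_info_density (P m) (?W m) (real m) t}) \<le> 2 powr (- (real m * r))) sequentially"
    unfolding eventually_sequentially by (intro exI[of _ 1]) simp
  moreover have "(\<lambda>m. 2 powr (- (real m * r))) \<longlonglongrightarrow> 0"
    using LIMSEQ_two_powr_mult[of "- r"] r by simp
  ultimately show ?thesis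
    unfolding info_sup_altdef by (intro plimsup_leI) (rule Lim_null_comparison)
qed

lemma dist_inf_deterministic_le:
  fixes P :: "nat \<Rightarrow> ('s \<times> 'z) pmf" and f :: "nat \<Rightarrow> 's \<times> 'z \<Rightarrow> 'c" and G :: "nat \<Rightarrow> 's \<Rightarrow> 'c"
  assumes not_null: "\<not> (\<lambda>m. measure (P m) (A m)) \<longlonglongrightarrow> 0"
    and f_on_A: "\<And>m x. x \<in> set_pmf (P m) \<Longrightarrow> x \<in> A m \<Longrightarrow> f m x = G m (fst x)"
    and G_tail: "\<And>\<delta>. DE < \<delta> \<Longrightarrow> (\<lambda>m. measure (P m) {x. \<delta> \<le> d m (fst x) (G m (fst x))}) \<longlonglongrightarrow> 0"
  shows "dist_inf (ch_law P (\<lambda>m s z. return_pmf (f m (s, z)))) d \<le> ereal DE"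
proof (rule dist_inf_leI)
  fix \<delta> assume \<delta>: "DE < \<delta>"
  define bad where "bad m = {x. \<delta> \<le> d m (fst x) (f m x)}" for m
  define G_bad where "G_bad m = {x :: 's \<times> 'z. \<delta> \<le> d m (fst x) (G m (fst x))}" for m
  have A_le: "measure (P m) (A m) \<le> (1 - measure (P m) (bad m)) + measure (P m) (G_bad m)" for m
  proof -
    have "measure (P m) (A m) = measure (P m) (A m \<inter> set_pmf (P m))"
      by (simp add: measure_Int_set_pmf)
    also have "\<dots> \<le> measure (P m) (- bad m \<union> G_bad m)"
      by (rule measure_pmf.finite_measure_mono) (auto simp: bad_def G_bad_def f_on_A)
    also have "\<dots> \<le> measure (P m) (- bad m) + measure (P m) (G_bad m)"
      by (rule measure_Un_le) auto
    also have "measure (P m) (- bad m) = 1 - measure (P m) (bad m)"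
      using measure_pmf.prob_compl[of "bad m" "P m"] by (simp add: Compl_eq_Diff_UNIV)
    finally show ?thesis .
  qed
  show "\<not> (\<lambda>m. measure (ch_law P (\<lambda>m s z. return_pmf (f m (s, z))) m)
      {x. \<delta> \<le> d m (fst x) (snd x)}) \<longlonglongrightarrow> 1"
  proof
    assume "(\<lambda>m. measure (ch_law P (\<lambda>m s z. return_pmf (f m (s, z))) m)
        {x. \<delta> \<le> d m (fst x) (snd x)}) \<longlonglongrightarrow> 1"
    then have "(\<lambda>m. 1 - measure (P m) (bad m)) \<longlonglongrightarrow> 0"
      using tendsto_diff[OF tendsto_const[of "1::real"]]
      unfolding ch_law_deterministic by (fastforce simp: bad_def vimage_def)
    then have "(\<lambda>m. (1 - measure (P m) (bad m)) + measure (P m) (G_bad m)) \<longlonglongrightarrow> 0"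
      using tendsto_add[OF _ G_tail[OF \<delta>, folded G_bad_def]] by fastforce
    then have "(\<lambda>m. measure (P m) (A m)) \<longlonglongrightarrow> 0"
      by (rule Lim_null_comparison[rotated]) (simp add: A_le)
    with not_null show False by blast
  qed
qed

lemma exists_channel_info_sup_le:
  fixes P :: "nat \<Rightarrow> ('s \<times> 'z) pmf" and G :: "nat \<Rightarrow> 's \<Rightarrow> 'c"
  assumes fin_P: "\<And>m. finite (set_pmf (P m))" and supp_S: "\<And>m. fst ` set_pmf (P m) \<subseteq> SS m"
    and G: "G \<in> det_maps SS CS"
    and G_tail: "\<And>\<delta>. DE < \<delta> \<Longrightarrow> (\<lambda>m. measure (P m) {x. \<delta> \<le> d m (fst x) (G m (fst x))}) \<longlonglongrightarrow> 0"
    and r: "cond_ent_inf P < ereal r"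
  shows "\<exists>W\<in>channels CS. dist_inf (ch_law P W) d \<le> ereal DE \<and> info_sup P W \<le> ereal r"
proof -
  define low where "low m = {x. cond_self_info (P m) (real m) x < r}" for m
  have "\<exists>c. c \<in> CS m" for m
    using G supp_S[of m] set_pmf_not_empty[of "P m"] unfolding det_maps_def by fastforce
  then obtain c where c: "\<And>m. c m \<in> CS m" by metis
  define f where "f m x = (if fst x \<in> SS m \<and> x \<in> low m then G m (fst x) else c m)" for m x
  define W where "W m s z = return_pmf (f m (s, z))" for m s z
  have "W \<in> channels CS"
    using G c by (auto simp: channels_def W_def f_def det_maps_def)
  moreover have "dist_inf (ch_law P W) d \<le> ereal DE"
  proof -
    have "\<not> (\<lambda>m. measure (P m) (low m)) \<longlonglongrightarrow> 0"
    proof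
      assume "(\<lambda>m. measure (P m) (low m)) \<longlonglongrightarrow> 0"
      then have "ereal r \<le> cond_ent_inf P"
        unfolding cond_ent_inf_altdef low_def by (rule pliminf_geI)
      with r show False by simp
    qed
    then show ?thesis
      unfolding W_def using supp_S
      by (intro dist_inf_deterministic_le[where P = P and G = G and d = d and DE = DE, OF _ _ G_tail]) (auto simp: f_def)
  qed
  moreover have "info_sup P W \<le> ereal r"
  proof -
    have "0 < ereal r" using cond_ent_inf_nonneg[of P] r by (rule le_less_trans)
    then show ?thesis
      unfolding W_def using fin_P
      by (intro info_sup_deterministic_le[where c = c]) (auto simp: f_def low_def split: if_splits)
  qed
  ultimately show ?thesis by blast
qed

lemma lossy_equiv_le_cond_ent_inf:
  fixes P :: "nat \<Rightarrow> ('s \<times> 'z) pmf" and d :: "nat \<Rightarrow> 's \<Rightarrow> 'c \<Rightarrow> real"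
  assumes fin_P: "\<And>m. finite (set_pmf (P m))" and supp_S: "\<And>m. fst ` set_pmf (P m) \<subseteq> SS m"
    and DE: "DE_min' SS CS P d \<le> ereal DE"
  shows "lossy_equiv SS CS P d DE \<le> cond_ent_inf P"
proof -
  obtain G where G: "G \<in> det_maps SS CS"
    and G_tail: "\<And>\<delta>. DE < \<delta> \<Longrightarrow> (\<lambda>m. measure (P m) {x. \<delta> \<le> d m (fst x) (G m (fst x))}) \<longlonglongrightarrow> 0"
    by (rule det_map_tail_tendsto_zero[OF DE]) blast
  have "\<not> ereal DE < DE_min SS CS P d"
    using DE_min_le_DE_min'[of SS CS P d] DE by simp
  then have lossy_equiv_eq: "lossy_equiv SS CS P d DE
      = (INF W \<in> {W \<in> channels CS. dist_inf (ch_law P W) d \<le> ereal DE}. info_sup P W)"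
    unfolding lossy_equiv_def by simp
  show ?thesis
  proof (rule dense_ge)
    fix y assume y: "cond_ent_inf P < y"
    show "lossy_equiv SS CS P d DE \<le> y"
    proof (cases y)
      case (real r)
      with y have r: "cond_ent_inf P < ereal r" by simp
      from exists_channel_info_sup_le[where d = d and DE = DE, OF fin_P supp_S G G_tail r]
      obtain W where "W \<in> channels CS" and "dist_inf (ch_law P W) d \<le> ereal DE"
        and W_info: "info_sup P W \<le> ereal r"
        by blast
      then have "lossy_equiv SS CS P d DE \<le> info_sup P W"
        unfolding lossy_equiv_eq by (intro INF_lower) simp
      then show ?thesis unfolding real using W_info by (rule order_trans)
    qed (use y in auto)
  qed
qed

subsection \<open>Converse for the Hamming distortion\<close>

lemma prob_correct_tendsto_zero:
  fixes P :: "nat \<Rightarrow> ('s \<times> 'z) pmf" and W :: "nat \<Rightarrow> 's \<Rightarrow> 'z \<Rightarrow> 's pmf"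
  assumes fin_P: "\<And>m. finite (set_pmf (P m))" and less: "info_sup P W < cond_ent_inf P"
  shows "(\<lambda>m. measure (ch_law P W m) {x. fst x = snd x}) \<longlonglongrightarrow> 0"
proof -
  obtain a where a: "info_sup P W < ereal a" and a_less: "ereal a < cond_ent_inf P"
    using ereal_dense2[OF less] by blast
  obtain b where ab: "ereal a < ereal b" and b: "ereal b < cond_ent_inf P"
    using ereal_dense2[OF a_less] by blast
  define bound where "bound m =
      measure (joint_ch (P m) (W m)) {t. a < cond_info_density (P m) (W m) (real m) t}
      + measure (P m) {x. cond_self_info (P m) (real m) x < b} + 2 powr (real m * (a - b))" for m
  have info_tail: "(\<lambda>m. measure (joint_ch (P m) (W m))
      {t. a < cond_info_density (P m) (W m) (real m) t}) \<longlonglongrightarrow> 0"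
    using tendsto_prob_greater_if_plimsup_less[OF a[unfolded info_sup_altdef]] .
  have self_info_tail: "(\<lambda>m. measure (P m) {x. cond_self_info (P m) (real m) x < b}) \<longlonglongrightarrow> 0"
    using tendsto_prob_less_if_pliminf_greater[OF b[unfolded cond_ent_inf_altdef]] .
  have "(\<lambda>m. 2 powr (real m * (a - b))) \<longlonglongrightarrow> 0"
    using ab by (intro LIMSEQ_two_powr_mult) simp
  from tendsto_add[OF tendsto_add[OF info_tail self_info_tail] this] have "bound \<longlonglongrightarrow> 0"
    unfolding bound_def by simp
  moreover have "measure (ch_law P W m) {x. fst x = snd x} \<le> bound m" if "0 < m" for m
  proof -
    have "measure (ch_law P W m) {x. fst x = snd x}
        = measure (joint_ch (P m) (W m)) {t. fst t = snd (snd t)}"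
      by (simp add: ch_law_def vimage_def)
    also have "\<dots> \<le> bound m"
      unfolding bound_def using that by (intro prob_correct_le[OF fin_P]) simp
    finally show ?thesis .
  qed
  then have "eventually (\<lambda>m. norm (measure (ch_law P W m) {x. fst x = snd x}) \<le> bound m) sequentially"
    unfolding eventually_sequentially by (intro exI[of _ 1]) simp
  ultimately show ?thesis
    by (rule Lim_null_comparison[rotated])
qed

lemma cond_ent_inf_le_info_sup:
  fixes P :: "nat \<Rightarrow> ('s \<times> 'z) pmf" and W :: "nat \<Rightarrow> 's \<Rightarrow> 'z \<Rightarrow> 's pmf"
  assumes fin_P: "\<And>m. finite (set_pmf (P m))"
    and not_one: "\<not> (\<lambda>m. measure (ch_law P W m) {x. fst x \<noteq> snd x}) \<longlonglongrightarrow> 1"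
  shows "cond_ent_inf P \<le> info_sup P W"
proof (rule ccontr)
  assume "\<not> cond_ent_inf P \<le> info_sup P W"
  then have "info_sup P W < cond_ent_inf P" by (simp add: not_le)
  then have correct: "(\<lambda>m. measure (ch_law P W m) {x. fst x = snd x}) \<longlonglongrightarrow> 0"
    by (rule prob_correct_tendsto_zero[OF fin_P])
  have compl: "measure (ch_law P W m) {x. fst x \<noteq> snd x}
      = 1 - measure (ch_law P W m) {x. fst x = snd x}" for m
    using measure_pmf.prob_compl[of "{x. fst x = snd x}" "ch_law P W m"]
    by (simp add: Compl_eq_Diff_UNIV[symmetric] Collect_neg_eq)
  have "(\<lambda>m. measure (ch_law P W m) {x. fst x \<noteq> snd x}) \<longlonglongrightarrow> 1 - 0"
    unfolding compl by (rule tendsto_diff[OF tendsto_const correct])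
  with not_one show False by simp
qed

lemma error_prob_not_tendsto_one:
  fixes \<mu> :: "nat \<Rightarrow> ('s \<times> 's) pmf"
  assumes "dist_inf \<mu> (\<lambda>m s t. if s \<noteq> t then 1 else 0) \<le> 0"
  shows "\<not> (\<lambda>m. measure (\<mu> m) {x. fst x \<noteq> snd x}) \<longlonglongrightarrow> 1"
proof -
  have "dist_inf \<mu> (\<lambda>m s t. if s \<noteq> t then 1 else 0) < ereal (1 / 2)"
    using assms by (rule le_less_trans) simp
  then obtain \<delta> :: real where "\<delta> < 1 / 2"
    and \<delta>: "\<not> (\<lambda>m. measure (\<mu> m) {x. \<delta> \<le> (if fst x \<noteq> snd x then 1 else 0)}) \<longlonglongrightarrow> 1"
    unfolding dist_inf_altdef Inf_less_iff by auto
  moreover have "0 < \<delta>"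
  proof (rule ccontr)
    assume "\<not> 0 < \<delta>"
    then have "(\<lambda>m. measure (\<mu> m) {x. \<delta> \<le> (if fst x \<noteq> snd x then 1 else 0)}) = (\<lambda>m. 1)"
      by simp
    with \<delta> show False by simp
  qed
  ultimately have eq: "{x. \<delta> \<le> (if fst x \<noteq> snd x then 1 else 0)} = {x. fst x \<noteq> snd x}"
    by auto
  show ?thesis using \<delta> unfolding eq .
qed

lemma cond_ent_inf_le_lossy_equiv_hamming:
  fixes P :: "nat \<Rightarrow> ('s \<times> 'z) pmf"
  assumes fin_P: "\<And>m. finite (set_pmf (P m))"
  shows "cond_ent_inf P \<le> lossy_equiv SS SS P (\<lambda>m s t. if s \<noteq> t then 1 else 0) 0"
  unfolding lossy_equiv_def zero_ereal_def[symmetric]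
  by (auto intro!: INF_greatest cond_ent_inf_le_info_sup[OF fin_P] error_prob_not_tendsto_one)

lemma DE_min'_hamming_le_zero: "DE_min' SS SS P (\<lambda>m s t. if s \<noteq> t then 1 else 0) \<le> 0"
proof -
  have "DE_min' SS SS P (\<lambda>m s t. if s \<noteq> t then 1 else 0)
      \<le> dist_sup (det_law P (\<lambda>m s. s)) (\<lambda>m s t. if s \<noteq> t then 1 else 0)"
    unfolding DE_min'_def by (rule INF_lower) (simp add: det_maps_def)
  also have "\<dots> \<le> ereal 0"
    unfolding dist_sup_def by (rule plimsup_leI) (simp add: det_law_def vimage_def)
  finally show ?thesis by (simp add: zero_ereal_def)
qed

theorem proposition1:
  fixes SS :: "nat \<Rightarrow> 's set" and ZS :: "nat \<Rightarrow> 'z set" and CS :: "nat \<Rightarrow> 'c set"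
    and P :: "nat \<Rightarrow> ('s \<times> 'z) pmf" and d :: "nat \<Rightarrow> 's \<Rightarrow> 'c \<Rightarrow> real"
  assumes fin_S: "\<And>m. finite (SS m)" and fin_Z: "\<And>m. finite (ZS m)"
    and fin_C: "\<And>m. finite (CS m)"
    and supp: "\<And>m. set_pmf (P m) \<subseteq> SS m \<times> ZS m"
    and d_nonneg: "\<And>m s c. d m s c \<ge> 0"
  shows "(\<forall>DE::real. ereal DE \<ge> DE_min' SS CS P d \<longrightarrow>
            lossy_equiv SS CS P d DE \<le> cond_ent_inf P)
       \<and> lossy_equiv SS SS P (\<lambda>m s t. if s \<noteq> t then 1 else 0) 0 = cond_ent_inf P"
proof -
  have fin_P: "finite (set_pmf (P m))" for m
    using supp[of m] fin_S[of m] fin_Z[of m] by (meson finite_SigmaI finite_subset)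
  have supp_S: "fst ` set_pmf (P m) \<subseteq> SS m" for m
    using supp[of m] by auto
  have "lossy_equiv SS SS P (\<lambda>m s t. if s \<noteq> t then 1 else 0) 0 \<le> cond_ent_inf P"
    using lossy_equiv_le_cond_ent_inf[where P = P, OF fin_P supp_S
        DE_min'_hamming_le_zero[unfolded zero_ereal_def]] .
  moreover have "cond_ent_inf P \<le> lossy_equiv SS SS P (\<lambda>m s t. if s \<noteq> t then 1 else 0) 0"
    using cond_ent_inf_le_lossy_equiv_hamming[where P = P, OF fin_P] .
  ultimately show ?thesis
    using lossy_equiv_le_cond_ent_inf[where P = P and d = d, OF fin_P supp_S] by auto
qed

end
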